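(* Let $A$ be an arborally satisfied set that is doubly congruent with a BST $T$. Then for any top tree $\tau$ of $T$, if the keys of $\tau$ are accessed (i.e. a point $(c,k)$ is added for each key $k$ of $\tau$) along a single column $c$, where $c$ is either the leftmost column of $A$, the rightmost column of $A$, the column immediately to the left of the leftmost column of $A$, or the column immediately to the right of the rightmost column of $A$, then the resulting set of points is arborally satisfied.
   Context: Point sets live in the grid plane, with the horizontal axis being time (columns) and the vertical axis being key (rows). A set $P$ of points is arborally satisfied if for every two points $x,y\in P$ not on a common horizontal or vertical line, the closed axis-parallel rectangle with corners $x$ and $y$ contains at least one point of $P$ other than $x,y$. A treap over pairs (key, priority) is a BST on keys that is a heap on priorities (higher priority nearer the root); ties in priority are grouped into multi-nodes, giving a multi-treap, in which each multi-node holds keys of equal priority and has children consistent with an underlying BST order (a multi-node may have up to one more child than its number of keys). For an arborally satisfied set $A$ whose rows are the keys of $T$, the left (right) priority of a row is the distance from the left (right) boundary of $A$ to the first point of $A$ in that row, smaller distance meaning higher priority. The left (right) multi-treap of $A$ is the multi-treap on these (row, priority) pairs. $T$ is left (right) congruent with $A$ if there is a choice of binary search tree structure inside each multi-node of the left (right) multi-treap of $A$ making the resulting tree equal to $T$; $T$ is doubly congruent with $A$ if it is both left and right congruent. A top tree of $T$ is a connected set of nodes containing the root. *)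

theory Defs
  imports Main "HOL-Library.Tree"
begin

(* Points of the grid plane: (time, key) = (column, row). *)
type_synonym point = "int \<times> int"

definition arborally_satisfied :: "point set \<Rightarrow> bool" where
  "arborally_satisfied P \<longleftrightarrow>
     (\<forall>x\<in>P. \<forall>y\<in>P. fst x \<noteq> fst y \<and> snd x \<noteq> snd y \<longrightarrow>
        (\<exists>z\<in>P. z \<noteq> x \<and> z \<noteq> y \<and>
           min (fst x) (fst y) \<le> fst z \<and> fst z \<le> max (fst x) (fst y) \<and>
           min (snd x) (snd y) \<le> snd z \<and> snd z \<le> max (snd x) (snd y)))"

definition leftmost_col :: "point set \<Rightarrow> int" where
  "leftmost_col A = Min (fst ` A)"

definition rightmost_col :: "point set \<Rightarrow> int" where
  "rightmost_col A = Max (fst ` A)"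

definition rows :: "point set \<Rightarrow> int set" where
  "rows A = snd ` A"

(* Left (right) priority of row k: distance from the left (right) boundary of A
   to the first point of A in row k; SMALLER value = HIGHER priority. *)
definition left_prio :: "point set \<Rightarrow> int \<Rightarrow> int" where
  "left_prio A k = Min {t. (t, k) \<in> A} - leftmost_col A"

definition right_prio :: "point set \<Rightarrow> int \<Rightarrow> int" where
  "right_prio A k = rightmost_col A - Max {t. (t, k) \<in> A}"

(* Multi-trees: a multi-node holds a sorted list of keys and a list of
   (length keys + 1) children; MLeaf is the empty (multi-)tree. *)
datatype 'a mtree = MLeaf | MNode "'a list" "'a mtree list"

definition gap :: "'a::linorder list \<Rightarrow> nat \<Rightarrow> 'a set" where
  "gap ks i = {k. (i = 0 \<or> ks ! (i - 1) < k) \<and> (i = length ks \<or> k < ks ! i)}"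

(* M is the multi-treap of the key set K with priority function prio
   (smaller prio value = higher priority; ties grouped into one multi-node). *)
inductive is_multi_treap :: "('a::linorder \<Rightarrow> int) \<Rightarrow> 'a set \<Rightarrow> 'a mtree \<Rightarrow> bool"
  for prio where
  mt_empty: "is_multi_treap prio {} MLeaf"
| mt_node: "\<lbrakk> finite K; K \<noteq> {};
             ks = sorted_list_of_set {k \<in> K. prio k = Min (prio ` K)};
             length cs = length ks + 1;
             \<forall>i < length cs. is_multi_treap prio (K \<inter> gap ks i) (cs ! i) \<rbrakk>
           \<Longrightarrow> is_multi_treap prio K (MNode ks cs)"

(* replace the leaves of a binary tree, from left to right, by the given trees *)
fun graft :: "'a tree \<Rightarrow> 'a tree list \<Rightarrow> 'a tree" where
  "graft Leaf ts = hd ts"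
| "graft (Node l x r) ts =
     Node (graft l (take (size1 l) ts)) x (graft r (drop (size1 l) ts))"

(* T results from M by choosing a binary search tree structure inside each multi-node *)
inductive refines :: "'a::linorder mtree \<Rightarrow> 'a tree \<Rightarrow> bool" where
  ref_leaf: "refines MLeaf Leaf"
| ref_node: "\<lbrakk> bst S; inorder S = ks; list_all2 refines cs ts \<rbrakk>
             \<Longrightarrow> refines (MNode ks cs) (graft S ts)"

definition left_multi_treap_of :: "point set \<Rightarrow> int mtree \<Rightarrow> bool" where
  "left_multi_treap_of A M \<longleftrightarrow> is_multi_treap (left_prio A) (rows A) M"

definition right_multi_treap_of :: "point set \<Rightarrow> int mtree \<Rightarrow> bool" where
  "right_multi_treap_of A M \<longleftrightarrow> is_multi_treap (right_prio A) (rows A) M"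

definition left_congruent :: "int tree \<Rightarrow> point set \<Rightarrow> bool" where
  "left_congruent T A \<longleftrightarrow> (\<exists>M. left_multi_treap_of A M \<and> refines M T)"

definition right_congruent :: "int tree \<Rightarrow> point set \<Rightarrow> bool" where
  "right_congruent T A \<longleftrightarrow> (\<exists>M. right_multi_treap_of A M \<and> refines M T)"

definition doubly_congruent :: "int tree \<Rightarrow> point set \<Rightarrow> bool" where
  "doubly_congruent T A \<longleftrightarrow> left_congruent T A \<and> right_congruent T A"

(* \<tau> is obtained from T by cutting off subtrees, i.e. its node set is connected and
   closed under taking parents *)
inductive pruned :: "'a tree \<Rightarrow> 'a tree \<Rightarrow> bool" where
  pr_cut: "pruned t Leaf"
| pr_node: "\<lbrakk> pruned l l'; pruned r r' \<rbrakk> \<Longrightarrow> pruned (Node l x r) (Node l' x r')"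

(* top tree: connected set of nodes containing the root *)
definition top_tree :: "'a tree \<Rightarrow> 'a tree \<Rightarrow> bool" where
  "top_tree \<tau> T \<longleftrightarrow> pruned T \<tau> \<and> \<tau> \<noteq> Leaf"

end

theory Submission
  imports Defs
begin

(* Congruence makes T a heap for the left (right) priorities: the first (last) point of a row is
   no later (no earlier) than that of any row below it in T. Let (c, k) be an access point, k in
   tau, and (t, j) a point of A with j <> k. If some other key of tau lies between k and j, its
   access point in column c closes the rectangle. Otherwise the lowest common ancestor of k and j
   in T, which lies in tau and between k and j, is k itself; so k has priority over j, and the
   first (last) point of row k lies between the columns c and t. *)

lemma set_tree_graft:
  "length ts = size1 S \<Longrightarrow> set_tree (graft S ts) = set_tree S \<union> (\<Union>t\<in>set ts. set_tree t)"
proof (induction S arbitrary: ts)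
  case Leaf
  then show ?case by (cases ts) auto
next
  case (Node l x r)
  have "set ts = set (take (size1 l) ts) \<union> set (drop (size1 l) ts)"
    by (metis append_take_drop_id set_append)
  then show ?case using Node by auto
qed

lemma map_tree_graft:
  "length ts = size1 S \<Longrightarrow> map_tree f (graft S ts) = graft (map_tree f S) (map (map_tree f) ts)"
proof (induction S arbitrary: ts)
  case Leaf
  then show ?case by (cases ts) auto
next
  case (Node l x r)
  then show ?case by (simp add: take_map drop_map)
qed

lemma heap_graft:
  assumes "length ts = size1 S" and "set_tree S \<subseteq> {v}"
    and "\<forall>t\<in>set ts. heap t \<and> (\<forall>y\<in>set_tree t. v \<le> y)"
  shows "heap (graft S ts)"
  using assms
proof (induction S arbitrary: ts)
  case Leaf
  then show ?case by (cases ts) auto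
next
  case (Node l x r)
  let ?ts\<^sub>l = "take (size1 l) ts" and ?ts\<^sub>r = "drop (size1 l) ts"
  have "set ?ts\<^sub>l \<subseteq> set ts" "set ?ts\<^sub>r \<subseteq> set ts"
    by (simp_all add: set_take_subset set_drop_subset)
  then have "heap (graft l ?ts\<^sub>l)" "heap (graft r ?ts\<^sub>r)"
    using Node by (auto intro!: Node.IH)
  moreover have "\<forall>y \<in> set_tree (graft l ?ts\<^sub>l) \<union> set_tree (graft r ?ts\<^sub>r). x \<le> y"
    using Node.prems \<open>set ?ts\<^sub>l \<subseteq> set ts\<close> \<open>set ?ts\<^sub>r \<subseteq> set ts\<close>
    by (auto simp: set_tree_graft)
  ultimately show ?case by simp
qed

lemma heap_if_refines_multi_treap:
  "refines M T \<Longrightarrow> is_multi_treap p K M \<Longrightarrow> heap (map_tree p T) \<and> set_tree T \<subseteq> K"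
proof (induction arbitrary: K rule: refines.induct)
  case ref_leaf
  then show ?case by simp
next
  case (ref_node S ks cs ts)
  let ?v = "Min (p ` K)"
  from ref_node.prems obtain fin: "finite K"
    and ks: "ks = sorted_list_of_set {k \<in> K. p k = ?v}"
    and len: "length cs = length ks + 1"
    and children: "\<forall>i < length cs. is_multi_treap p (K \<inter> gap ks i) (cs ! i)"
    by (cases rule: is_multi_treap.cases) auto
  have "finite {k \<in> K. p k = ?v}" using fin by simp
  then have root: "set_tree S = {k \<in> K. p k = ?v}"
    using ref_node.hyps(2) ks by (metis set_inorder set_sorted_list_of_set)
  have len_ts: "length ts = size1 S"
    using list_all2_lengthD[OF ref_node.IH] len ref_node.hyps(2)
    by (metis length_inorder size1_size)
  have subtrees: "heap (map_tree p t) \<and> set_tree t \<subseteq> K" if "t \<in> set ts" for t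
  proof -
    obtain i where "i < length ts" "t = ts ! i"
      using \<open>t \<in> set ts\<close> by (auto simp: in_set_conv_nth)
    moreover have "length cs = length ts" using list_all2_lengthD[OF ref_node.IH] by simp
    ultimately have "heap (map_tree p t) \<and> set_tree t \<subseteq> K \<inter> gap ks i"
      using ref_node.IH children by (fastforce simp: list_all2_conv_all_nth)
    then show ?thesis by blast
  qed
  have "heap (graft (map_tree p S) (map (map_tree p) ts))"
    using len_ts root fin
    by (intro heap_graft[where v = ?v]) (auto simp: tree.set_map dest!: subtrees)
  moreover have "set_tree (graft S ts) \<subseteq> K"
    using len_ts root subtrees by (auto simp: set_tree_graft)
  ultimately show ?case using len_ts by (simp add: map_tree_graft)
qed

lemma set_tree_pruned_subset: "pruned t t' \<Longrightarrow> set_tree t' \<subseteq> set_tree t"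
  by (induction rule: pruned.induct) auto

lemma pruned_key_between_or_prio_le:
  fixes p :: "'a::linorder \<Rightarrow> 'b::linorder"
  assumes "pruned T \<tau>" and "bst T" and "heap (map_tree p T)"
    and "k \<in> set_tree \<tau>" and "j \<in> set_tree T" and "j \<noteq> k"
  shows "(\<exists>m\<in>set_tree \<tau>. m \<noteq> k \<and> min k j \<le> m \<and> m \<le> max k j) \<or> p k \<le> p j"
  using assms
proof (induction rule: pruned.induct)
  case (pr_cut t)
  then show ?case by simp
next
  case (pr_node l l' r r' x)
  have sub: "set_tree l' \<subseteq> set_tree l" "set_tree r' \<subseteq> set_tree r"
    using pr_node.hyps by (simp_all add: set_tree_pruned_subset)
  consider "k = x" | "k \<in> set_tree l'" | "k \<in> set_tree r'"
    using pr_node.prems(3) by auto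
  then show ?case
  proof cases
    case 1
    then show ?thesis using pr_node.prems by (auto simp: tree.set_map)
  next
    case 2
    show ?thesis
    proof (cases "j \<in> set_tree l")
      case True
      then show ?thesis using 2 pr_node.IH(1) pr_node.prems by (auto simp: tree.set_map)
    next
      case False
      then have "k < x" "x \<le> j" using 2 sub pr_node.prems(1,4) by auto
      then show ?thesis by (intro disjI1 bexI[of _ x]) auto
    qed
  next
    case 3
    show ?thesis
    proof (cases "j \<in> set_tree r")
      case True
      then show ?thesis using 3 pr_node.IH(2) pr_node.prems by (auto simp: tree.set_map)
    next
      case False
      then have "j \<le> x" "x < k" using 3 sub pr_node.prems(1,4) by auto
      then show ?thesis by (intro disjI1 bexI[of _ x]) auto
    qed
  qed
qed

lemma arborally_satisfied_add_column:
  assumes sat: "arborally_satisfied A"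
    and new_old: "\<And>k t j. k \<in> S \<Longrightarrow> (t, j) \<in> A \<Longrightarrow> t \<noteq> c \<Longrightarrow> j \<noteq> k \<Longrightarrow>
       (\<exists>m\<in>S. m \<noteq> k \<and> min k j \<le> m \<and> m \<le> max k j) \<or>
       (\<exists>t'. (t', k) \<in> A \<and> min c t \<le> t' \<and> t' \<le> max c t)"
  shows "arborally_satisfied (A \<union> {(c, k) | k. k \<in> S})"
proof -
  let ?B = "A \<union> {(c, k) | k. k \<in> S}"
  have witness: "\<exists>z\<in>?B. z \<noteq> (c, k) \<and> z \<noteq> (t, j) \<and> min c t \<le> fst z \<and> fst z \<le> max c t \<and>
      min k j \<le> snd z \<and> snd z \<le> max k j"
    if "k \<in> S" "(c, k) \<notin> A" "(t, j) \<in> A" "t \<noteq> c" "j \<noteq> k" for k t j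
    using new_old[OF that(1,3-5)]
  proof
    assume "\<exists>m\<in>S. m \<noteq> k \<and> min k j \<le> m \<and> m \<le> max k j"
    then obtain m where "m \<in> S" "m \<noteq> k" "min k j \<le> m" "m \<le> max k j" by blast
    then show ?thesis using that by (intro bexI[of _ "(c, m)"]) auto
  next
    assume "\<exists>t'. (t', k) \<in> A \<and> min c t \<le> t' \<and> t' \<le> max c t"
    then obtain t' where "(t', k) \<in> A" "min c t \<le> t'" "t' \<le> max c t" by blast
    then show ?thesis using that by (intro bexI[of _ "(t', k)"]) auto
  qed
  show ?thesis
    unfolding arborally_satisfied_def
  proof (intro ballI impI)
    fix x y assume "x \<in> ?B" "y \<in> ?B" and apart: "fst x \<noteq> fst y \<and> snd x \<noteq> snd y"
    then consider "x \<in> A" "y \<in> A"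
      | k where "x = (c, k)" "k \<in> S" "x \<notin> A" "y \<in> A"
      | k where "y = (c, k)" "k \<in> S" "y \<notin> A" "x \<in> A"
      by auto
    then show "\<exists>z\<in>?B. z \<noteq> x \<and> z \<noteq> y \<and>
        min (fst x) (fst y) \<le> fst z \<and> fst z \<le> max (fst x) (fst y) \<and>
        min (snd x) (snd y) \<le> snd z \<and> snd z \<le> max (snd x) (snd y)"
    proof cases
      case 1
      then show ?thesis using sat apart unfolding arborally_satisfied_def by blast
    next
      case 2
      then show ?thesis using witness[of _ "fst y" "snd y"] apart by auto
    next
      case 3
      then show ?thesis
        using witness[of _ "fst x" "snd x"] apart by (auto simp: min.commute max.commute)
    qed
  qed
qed

lemma arborally_satisfied_access_pruned:
  fixes p :: "int \<Rightarrow> 'b::linorder"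
  assumes sat: "arborally_satisfied A" and "bst T" and T_rows: "set_tree T = rows A"
    and "heap (map_tree p T)" and "pruned T \<tau>"
    and prio_le: "\<And>k t j. k \<in> rows A \<Longrightarrow> (t, j) \<in> A \<Longrightarrow> p k \<le> p j \<Longrightarrow>
       \<exists>t'. (t', k) \<in> A \<and> min c t \<le> t' \<and> t' \<le> max c t"
  shows "arborally_satisfied (A \<union> {(c, k) | k. k \<in> set_tree \<tau>})"
proof (rule arborally_satisfied_add_column[OF sat])
  fix k t j assume k: "k \<in> set_tree \<tau>" and tj: "(t, j) \<in> A" and "j \<noteq> k"
  have "k \<in> rows A" using k set_tree_pruned_subset[OF \<open>pruned T \<tau>\<close>] T_rows by blast
  moreover have "j \<in> set_tree T" using tj T_rows unfolding rows_def by force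
  ultimately show "(\<exists>m\<in>set_tree \<tau>. m \<noteq> k \<and> min k j \<le> m \<and> m \<le> max k j) \<or>
      (\<exists>t'. (t', k) \<in> A \<and> min c t \<le> t' \<and> t' \<le> max c t)"
    using pruned_key_between_or_prio_le[OF \<open>pruned T \<tau>\<close> \<open>bst T\<close> \<open>heap (map_tree p T)\<close> k]
      prio_le[OF _ tj] \<open>j \<noteq> k\<close> by blast
qed

lemma finite_row: "finite A \<Longrightarrow> finite {t. (t, k) \<in> A}"
  by (rule finite_subset[of _ "fst ` A"]) force+

lemma nonempty_row: "k \<in> rows A \<Longrightarrow> {t. (t, k) \<in> A} \<noteq> {}"
  unfolding rows_def by force

lemma left_prio_le_imp_earlier_point:
  assumes "finite A" and "k \<in> rows A" and "(t, j) \<in> A" and "left_prio A k \<le> left_prio A j"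
  shows "\<exists>t'. (t', k) \<in> A \<and> leftmost_col A \<le> t' \<and> t' \<le> t"
proof (intro exI conjI)
  let ?t' = "Min {t. (t, k) \<in> A}"
  show "(?t', k) \<in> A"
    using Min_in[OF finite_row[OF assms(1)] nonempty_row[OF assms(2)]] by simp
  then show "leftmost_col A \<le> ?t'"
    unfolding leftmost_col_def using assms(1) by (metis Min_le finite_imageI fst_conv image_eqI)
  have "?t' \<le> Min {t. (t, j) \<in> A}" using assms(4) unfolding left_prio_def by simp
  also have "\<dots> \<le> t" using Min_le[OF finite_row[OF assms(1)]] assms(3) by simp
  finally show "?t' \<le> t" .
qed

lemma right_prio_le_imp_later_point:
  assumes "finite A" and "k \<in> rows A" and "(t, j) \<in> A" and "right_prio A k \<le> right_prio A j"
  shows "\<exists>t'. (t', k) \<in> A \<and> t \<le> t' \<and> t' \<le> rightmost_col A"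
proof (intro exI conjI)
  let ?t' = "Max {t. (t, k) \<in> A}"
  show "(?t', k) \<in> A"
    using Max_in[OF finite_row[OF assms(1)] nonempty_row[OF assms(2)]] by simp
  then show "?t' \<le> rightmost_col A"
    unfolding rightmost_col_def using assms(1) by (metis Max_ge finite_imageI fst_conv image_eqI)
  have "t \<le> Max {t. (t, j) \<in> A}" using Max_ge[OF finite_row[OF assms(1)]] assms(3) by simp
  also have "\<dots> \<le> ?t'" using assms(4) unfolding right_prio_def by simp
  finally show "t \<le> ?t'" .
qed

lemma arborally_satisfied_access_left:
  assumes "finite A" and "arborally_satisfied A" and "bst T" and "set_tree T = rows A"
    and "left_congruent T A" and "pruned T \<tau>" and "c \<le> leftmost_col A"
  shows "arborally_satisfied (A \<union> {(c, k) | k. k \<in> set_tree \<tau>})"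
proof -
  have "heap (map_tree (left_prio A) T)"
    using assms(5) heap_if_refines_multi_treap
    unfolding left_congruent_def left_multi_treap_of_def by blast
  then show ?thesis
  proof (rule arborally_satisfied_access_pruned[OF assms(2-4) _ assms(6)])
    fix k t j assume "k \<in> rows A" "(t, j) \<in> A" "left_prio A k \<le> left_prio A j"
    then show "\<exists>t'. (t', k) \<in> A \<and> min c t \<le> t' \<and> t' \<le> max c t"
      using left_prio_le_imp_earlier_point[OF assms(1)] assms(7)
      by (meson min.coboundedI1 max.coboundedI2 order_trans)
  qed
qed

lemma arborally_satisfied_access_right:
  assumes "finite A" and "arborally_satisfied A" and "bst T" and "set_tree T = rows A"
    and "right_congruent T A" and "pruned T \<tau>" and "rightmost_col A \<le> c"
  shows "arborally_satisfied (A \<union> {(c, k) | k. k \<in> set_tree \<tau>})"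
proof -
  have "heap (map_tree (right_prio A) T)"
    using assms(5) heap_if_refines_multi_treap
    unfolding right_congruent_def right_multi_treap_of_def by blast
  then show ?thesis
  proof (rule arborally_satisfied_access_pruned[OF assms(2-4) _ assms(6)])
    fix k t j assume "k \<in> rows A" "(t, j) \<in> A" "right_prio A k \<le> right_prio A j"
    then show "\<exists>t'. (t', k) \<in> A \<and> min c t \<le> t' \<and> t' \<le> max c t"
      using right_prio_le_imp_later_point[OF assms(1)] assms(7)
      by (meson min.coboundedI2 max.coboundedI1 order_trans)
  qed
qed

theorem mainTheorem5:
  fixes A :: "point set" and T :: "int tree" and \<tau> :: "int tree" and c :: int
  assumes "finite A"
    and "arborally_satisfied A"
    and "bst T"
    and "set_tree T = rows A"
    and "doubly_congruent T A"
    and "top_tree \<tau> T"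
    and "c \<in> {leftmost_col A, rightmost_col A, leftmost_col A - 1, rightmost_col A + 1}"
  shows "arborally_satisfied (A \<union> {(c, k) | k. k \<in> set_tree \<tau>})"
proof -
  have pruned: "pruned T \<tau>" using assms(6) unfolding top_tree_def by blast
  from assms(7) consider "c \<le> leftmost_col A" | "rightmost_col A \<le> c" by force
  then show ?thesis
  proof cases
    case 1
    with assms(5) pruned show ?thesis unfolding doubly_congruent_def
      by (blast intro: arborally_satisfied_access_left[OF assms(1-4)])
  next
    case 2
    with assms(5) pruned show ?thesis unfolding doubly_congruent_def
      by (blast intro: arborally_satisfied_access_right[OF assms(1-4)])
  qed
qed

end
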